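(* In the colored-tree setting below, let $v,v'\in V$ be horizontally close to each other. Then for every color $c\in C$ one of $f_c(v),f_c(v')$ is equal to or an ancestor of the other (i.e. the lowest-level vertex of the segment $f_c(v)f_c(v')\subset T_c$ is one of its endpoints), and there is a color $c\in C$ such that $$|vv'|\le|C|\,\mathcal L(f_c(v),f_c(v'))+|C|+1.$$
   Context: Let $(Z,d)$ be a bounded metric space with at least two points. Hyperbolic approximation with parameter $r\in(0,1/6]$: $k_0$ is the largest integer with $\operatorname{diam}Z<r^{k_0}$; for each integer $k\ge k_0$, $V_k\subset Z$ is a maximal $r^k$-separated subset; vertex set $V=\bigsqcup_{k\ge k_0}V_k$ with level $\ell(v)=k$ for $v\in V_k$, open ball $B(v)=\{z:d(z,v)<2r^k\}$, closure $\overline B(v)$; edges join equal-level vertices with $\overline B(v)\cap\overline B(v')\ne\emptyset$ and vertices on adjacent levels whose higher-level ball is contained in the lower-level ball; $|vv'|$ is the path metric with unit edges; the unique vertex of $V_{k_0}$ is the root. Distinct $v\in V_j$, $v'\in V_{j'}$, $j\ge j'\ge0$, are horizontally close if $d(v,v')<r^{j'}$. Colored-tree setting: assume $\operatorname{cdim}Z=n<\infty$, $r<\min\{\operatorname{diam}Z,1/\operatorname{diam}Z\}$, and $(\mathcal U_j)_{j\ge0}$ is a sequence of open coverings of $Z$, $\mathcal U_j=\bigcup_{c\in C}\mathcal U_j^c$ with $|C|=n+1$ and each $\mathcal U_j^c$ consisting of pairwise disjoint open sets, such that: (1) $\mathcal U_0^c=\{Z\}$ for all $c$ and $\sup_{U\in\mathcal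 U_j}\operatorname{diam}U<r^j$ for $j\ge1$; (2) for every $v\in V_{j+1}$, $j\ge0$, some $U\in\mathcal U_j$ contains $B(v)$; (3) for every $c$ and different $U\in\mathcal U_j^c$, $U'\in\mathcal U_{j'}^c$ with $j'\le j$, the set $B(U)=\bigcup\{B(v):v\in V_{j+1},B(v)\cap U\ne\emptyset\}$ satisfies $B(U)\subset U'$ or $B(U)\cap U'=\emptyset$. For $c\in C$, $T_c$ is the tree with vertex set $\bigsqcup_{j\ge0}\mathcal U_j^c$ (elements of $\mathcal U_j^c$ have level $j$; $Z\in\mathcal U_0^c$ is the root $v_c$); $U'$ of level $j'$ is an ancestor of $U$ of level $j$ if $j'<j$ and $U\subset U'$; $U,U'$ are joined by an edge iff one is an ancestor of the other with level maximal among ancestors of the other. $\mathcal L$ is the path metric on $T_c$ with unit edges. The map $f_c:V\to T_c$ sends the root of $X$ to $v_c$ and $v\in V_j$, $j>k_0$, to the element $U\in\mathcal U_{j'}^c$ with $B(v)\subset U$ and $j'\le\max\{j-1,0\}$ maximal. *)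

theory Defs
  imports "HOL-Analysis.Analysis"
begin

definition sdiam :: "('a \<Rightarrow> 'a \<Rightarrow> real) \<Rightarrow> 'a set \<Rightarrow> real" where
  "sdiam d S = Sup {d x y | x y. x \<in> S \<and> y \<in> S}"

definition gwalk :: "('v \<Rightarrow> 'v \<Rightarrow> bool) \<Rightarrow> 'v set \<Rightarrow> nat \<Rightarrow> 'v \<Rightarrow> 'v \<Rightarrow> bool" where
  "gwalk E Vs n x y \<longleftrightarrow> (\<exists>xs. length xs = Suc n \<and> hd xs = x \<and> last xs = y \<and> set xs \<subseteq> Vs
       \<and> (\<forall>i<n. E (xs ! i) (xs ! Suc i)))"

definition gdist :: "('v \<Rightarrow> 'v \<Rightarrow> bool) \<Rightarrow> 'v set \<Rightarrow> 'v \<Rightarrow> 'v \<Rightarrow> nat" where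
  "gdist E Vs x y = (LEAST n. gwalk E Vs n x y)"

text \<open>An open covering of (Z,d) with mesh at most tau, Lebesgue number at least delta*tau
  and multiplicity at most n+1 (Buyalo--Schroeder).\<close>
definition cdim_le :: "'a set \<Rightarrow> ('a \<Rightarrow> 'a \<Rightarrow> real) \<Rightarrow> nat \<Rightarrow> bool" where
  "cdim_le Z d n \<longleftrightarrow> (\<exists>\<delta>. 0 < \<delta> \<and> \<delta> < 1 \<and> (\<exists>\<tau>0>0. \<forall>\<tau>. 0 < \<tau> \<and> \<tau> < \<tau>0 \<longrightarrow>
     (\<exists>\<U>. (\<forall>U\<in>\<U>. openin (Metric_space.mtopology Z d) U) \<and> \<Union>\<U> = Z
        \<comment> \<open>mesh\<close>
        \<and> (\<forall>U\<in>\<U>. \<forall>x\<in>U. \<forall>y\<in>U. d x y \<le> \<tau>)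
        \<comment> \<open>Lebesgue number L(U) = inf_x sup_U dist(x, Z - U) \<ge> delta tau\<close>
        \<and> (\<forall>x\<in>Z. \<forall>s < \<delta> * \<tau>. \<exists>U\<in>\<U>. \<forall>y\<in>Z - U. s < d x y)
        \<comment> \<open>multiplicity\<close>
        \<and> (\<forall>x\<in>Z. finite {U\<in>\<U>. x \<in> U} \<and> card {U\<in>\<U>. x \<in> U} \<le> n + 1))))"

definition cdim_eq :: "'a set \<Rightarrow> ('a \<Rightarrow> 'a \<Rightarrow> real) \<Rightarrow> nat \<Rightarrow> bool" where
  "cdim_eq Z d n \<longleftrightarrow> cdim_le Z d n \<and> (\<forall>m<n. \<not> cdim_le Z d m)"

definition separated :: "('a \<Rightarrow> 'a \<Rightarrow> real) \<Rightarrow> real \<Rightarrow> 'a set \<Rightarrow> bool" where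
  "separated d a S \<longleftrightarrow> (\<forall>x\<in>S. \<forall>y\<in>S. x \<noteq> y \<longrightarrow> a \<le> d x y)"

definition max_separated :: "'a set \<Rightarrow> ('a \<Rightarrow> 'a \<Rightarrow> real) \<Rightarrow> real \<Rightarrow> 'a set \<Rightarrow> bool" where
  "max_separated Z d a S \<longleftrightarrow> S \<subseteq> Z \<and> separated d a S \<and>
     (\<forall>W. S \<subseteq> W \<and> W \<subseteq> Z \<and> separated d a W \<longrightarrow> W = S)"

definition hk0 :: "'a set \<Rightarrow> ('a \<Rightarrow> 'a \<Rightarrow> real) \<Rightarrow> real \<Rightarrow> int" where
  "hk0 Z d r = (GREATEST k::int. sdiam d Z < r powi k)"

text \<open>Vertices are pairs (level k, point v \<in> V k); this realises the disjoint union.\<close>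
definition hverts :: "'a set \<Rightarrow> ('a \<Rightarrow> 'a \<Rightarrow> real) \<Rightarrow> real \<Rightarrow> (int \<Rightarrow> 'a set) \<Rightarrow> (int \<times> 'a) set" where
  "hverts Z d r V = {(k, v). hk0 Z d r \<le> k \<and> v \<in> V k}"

definition hball :: "'a set \<Rightarrow> ('a \<Rightarrow> 'a \<Rightarrow> real) \<Rightarrow> real \<Rightarrow> int \<times> 'a \<Rightarrow> 'a set" where
  "hball Z d r p = {z \<in> Z. d z (snd p) < 2 * r powi (fst p)}"

definition hcball :: "'a set \<Rightarrow> ('a \<Rightarrow> 'a \<Rightarrow> real) \<Rightarrow> real \<Rightarrow> int \<times> 'a \<Rightarrow> 'a set" where
  "hcball Z d r p = (Metric_space.mtopology Z d) closure_of (hball Z d r p)"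

definition hedge :: "'a set \<Rightarrow> ('a \<Rightarrow> 'a \<Rightarrow> real) \<Rightarrow> real \<Rightarrow> (int \<Rightarrow> 'a set)
    \<Rightarrow> int \<times> 'a \<Rightarrow> int \<times> 'a \<Rightarrow> bool" where
  "hedge Z d r V p q \<longleftrightarrow> p \<in> hverts Z d r V \<and> q \<in> hverts Z d r V \<and>
     ((fst p = fst q \<and> p \<noteq> q \<and> hcball Z d r p \<inter> hcball Z d r q \<noteq> {})
      \<or> (fst q = fst p + 1 \<and> hball Z d r q \<subseteq> hball Z d r p)
      \<or> (fst p = fst q + 1 \<and> hball Z d r p \<subseteq> hball Z d r q))"

definition hdist :: "'a set \<Rightarrow> ('a \<Rightarrow> 'a \<Rightarrow> real) \<Rightarrow> real \<Rightarrow> (int \<Rightarrow> 'a set)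
    \<Rightarrow> int \<times> 'a \<Rightarrow> int \<times> 'a \<Rightarrow> nat" where
  "hdist Z d r V = gdist (hedge Z d r V) (hverts Z d r V)"

definition horiz_close :: "('a \<Rightarrow> 'a \<Rightarrow> real) \<Rightarrow> real \<Rightarrow> int \<times> 'a \<Rightarrow> int \<times> 'a \<Rightarrow> bool" where
  "horiz_close d r p q \<longleftrightarrow> p \<noteq> q \<and> 0 \<le> min (fst p) (fst q) \<and>
     d (snd p) (snd q) < r powi (min (fst p) (fst q))"

definition tverts :: "(nat \<Rightarrow> 'c \<Rightarrow> 'a set set) \<Rightarrow> 'c \<Rightarrow> (nat \<times> 'a set) set" where
  "tverts \<U> c = {(j, U). U \<in> \<U> j c}"

definition tanc :: "nat \<times> 'a set \<Rightarrow> nat \<times> 'a set \<Rightarrow> bool" where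
  "tanc x y \<longleftrightarrow> fst x < fst y \<and> snd y \<subseteq> snd x"

definition tedge :: "(nat \<Rightarrow> 'c \<Rightarrow> 'a set set) \<Rightarrow> 'c \<Rightarrow> nat \<times> 'a set \<Rightarrow> nat \<times> 'a set \<Rightarrow> bool" where
  "tedge \<U> c x y \<longleftrightarrow> x \<in> tverts \<U> c \<and> y \<in> tverts \<U> c \<and>
     ((tanc x y \<and> (\<forall>z\<in>tverts \<U> c. tanc z y \<longrightarrow> fst z \<le> fst x))
      \<or> (tanc y x \<and> (\<forall>z\<in>tverts \<U> c. tanc z x \<longrightarrow> fst z \<le> fst y)))"

definition tdist :: "(nat \<Rightarrow> 'c \<Rightarrow> 'a set set) \<Rightarrow> 'c \<Rightarrow> nat \<times> 'a set \<Rightarrow> nat \<times> 'a set \<Rightarrow> nat" where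
  "tdist \<U> c = gdist (tedge \<U> c) (tverts \<U> c)"

definition bigB :: "'a set \<Rightarrow> ('a \<Rightarrow> 'a \<Rightarrow> real) \<Rightarrow> real \<Rightarrow> (int \<Rightarrow> 'a set) \<Rightarrow> nat \<Rightarrow> 'a set \<Rightarrow> 'a set" where
  "bigB Z d r V j U = \<Union>{hball Z d r (int j + 1, v) | v. v \<in> V (int j + 1) \<and> hball Z d r (int j + 1, v) \<inter> U \<noteq> {}}"

definition fmap :: "'a set \<Rightarrow> ('a \<Rightarrow> 'a \<Rightarrow> real) \<Rightarrow> real \<Rightarrow> (nat \<Rightarrow> 'c \<Rightarrow> 'a set set) \<Rightarrow> 'c
    \<Rightarrow> int \<times> 'a \<Rightarrow> nat \<times> 'a set" where
  "fmap Z d r \<U> c p =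
    (if fst p = hk0 Z d r then (0, Z)
     else (let jm = nat (max (fst p - 1) 0);
               j' = (GREATEST j'. j' \<le> jm \<and> (\<exists>U\<in>\<U> j' c. hball Z d r p \<subseteq> U))
           in (j', THE U. U \<in> \<U> j' c \<and> hball Z d r p \<subseteq> U)))"

definition colored_setting ::
  "'a set \<Rightarrow> ('a \<Rightarrow> 'a \<Rightarrow> real) \<Rightarrow> real \<Rightarrow> (int \<Rightarrow> 'a set) \<Rightarrow> nat \<Rightarrow> 'c set
     \<Rightarrow> (nat \<Rightarrow> 'c \<Rightarrow> 'a set set) \<Rightarrow> bool" where
  "colored_setting Z d r V n C \<U> \<longleftrightarrow>
     \<comment> \<open>bounded metric space with at least two points\<close>
     Metric_space Z d \<and> Metric_space.mbounded Z d Z \<and> (\<exists>x\<in>Z. \<exists>y\<in>Z. x \<noteq> y)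
     \<comment> \<open>hyperbolic approximation data\<close>
     \<and> 0 < r \<and> r \<le> 1/6
     \<and> (\<forall>k. hk0 Z d r \<le> k \<longrightarrow> max_separated Z d (r powi k) (V k))
     \<comment> \<open>colored tree assumptions\<close>
     \<and> cdim_eq Z d n \<and> r < min (sdiam d Z) (1 / sdiam d Z)
     \<and> finite C \<and> card C = n + 1
     \<and> (\<forall>j. \<forall>c\<in>C. \<forall>U\<in>\<U> j c. openin (Metric_space.mtopology Z d) U \<and> U \<noteq> {})
     \<and> (\<forall>j. \<Union>(\<Union>c\<in>C. \<U> j c) = Z)
     \<and> (\<forall>j. \<forall>c\<in>C. pairwise disjnt (\<U> j c))
     \<comment> \<open>(1)\<close>
     \<and> (\<forall>c\<in>C. \<U> 0 c = {Z})
     \<and> (\<forall>j\<ge>1. Sup ((sdiam d) ` (\<Union>c\<in>C. \<U> j c)) < r ^ j)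
     \<comment> \<open>(2)\<close>
     \<and> (\<forall>j. \<forall>v\<in>V (int j + 1). \<exists>U\<in>(\<Union>c\<in>C. \<U> j c). hball Z d r (int j + 1, v) \<subseteq> U)
     \<comment> \<open>(3)\<close>
     \<and> (\<forall>c\<in>C. \<forall>j j' U U'. U \<in> \<U> j c \<and> U' \<in> \<U> j' c \<and> U \<noteq> U' \<and> j' \<le> j \<longrightarrow>
          bigB Z d r V j U \<subseteq> U' \<or> bigB Z d r V j U \<inter> U' = {})"

end

theory Submission
  imports Defs
begin

(* Write p = (a, v) and q = (b, w) with b <= a. Climbing a - b levels from v reaches a vertex
   of level b whose ball contains v, as does B(w); hence |pq| <= a - b + 1.
   By condition (2), for every level k in [b, a) some color c has a set of level k containing B(v);
   by pigeonhole one color c does so for at least (a - b)/|C| levels.  Condition (3) makes the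
   sets of one color nested as soon as they meet, so these sets lie on the path from the root
   to f_c(p) in T_c, and all of them except possibly the one of level b lie off the path from
   the root to f_c(q).
   Their number is therefore bounded by the difference of the depths of f_c(p) and f_c(q),
   which is at most the tree distance since depth changes by one along every edge. *)

lemma (in Metric_space) max_separated_net:
  assumes S: "max_separated M d a S" and z: "z \<in> M" and a: "0 < a"
  shows "\<exists>v\<in>S. d z v < a"
proof (rule ccontr)
  assume far: "\<not> (\<exists>v\<in>S. d z v < a)"
  have "separated d a (insert z S)"
    using S far unfolding max_separated_def separated_def by (auto simp: commute not_less)
  then have "insert z S = S"
    using S z unfolding max_separated_def by blast
  then show False
    using far z a by force
qed

lemma GreatestI_int:
  fixes P :: "int \<Rightarrow> bool"
  assumes "P k" and bounded: "\<And>k. P k \<Longrightarrow> k \<le> m"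
  shows "P (GREATEST k. P k)"
proof -
  define g where "g = Max {k'. k \<le> k' \<and> k' \<le> m \<and> P k'}"
  have "finite {k'. k \<le> k' \<and> k' \<le> m \<and> P k'}"
    by (rule finite_subset[of _ "{k..m}"]) auto
  then have "P g" and "k \<le> g" and "\<And>k'. k \<le> k' \<Longrightarrow> P k' \<Longrightarrow> k' \<le> g"
    unfolding g_def using assms by (auto intro: Max_ge dest: Max_in[THEN CollectD])
  then have "k' \<le> g" if "P k'" for k'
    using that by (cases "k \<le> k'") auto
  with \<open>P g\<close> have "(GREATEST k. P k) = g"
    by (intro Greatest_equality)
  with \<open>P g\<close> show ?thesis by simp
qed

lemma pigeonhole_card_UN:
  assumes "finite A" "finite C" "C \<noteq> {}" "A \<subseteq> (\<Union>c\<in>C. N c)"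
  shows "\<exists>c\<in>C. card A \<le> card C * card (N c \<inter> A)"
proof -
  define m where "m = Max ((\<lambda>c. card (N c \<inter> A)) ` C)"
  have "m \<in> (\<lambda>c. card (N c \<inter> A)) ` C"
    unfolding m_def using assms(2,3) by (intro Max_in) auto
  then obtain c where "c \<in> C" "m = card (N c \<inter> A)"
    by blast
  have "card A = card (\<Union>c\<in>C. N c \<inter> A)"
    using assms(4) by (metis Int_absorb1 Int_commute UN_extend_simps(4))
  also have "\<dots> \<le> (\<Sum>c\<in>C. card (N c \<inter> A))"
    using assms(2) by (rule card_UN_le)
  also have "\<dots> \<le> card C * m"
    unfolding m_def using sum_bounded_above[of C "\<lambda>c. card (N c \<inter> A)"] assms(2) by simp
  finally show ?thesis
    using \<open>c \<in> C\<close> \<open>m = card (N c \<inter> A)\<close> by blast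
qed

section \<open>Walks in graphs\<close>

lemma gwalk_0_iff: "gwalk E Vs 0 x y \<longleftrightarrow> x = y \<and> x \<in> Vs"
  unfolding gwalk_def by (auto simp: length_Suc_conv)

lemma gwalk_Suc_iff:
  "gwalk E Vs (Suc n) x z \<longleftrightarrow> (\<exists>y. gwalk E Vs n x y \<and> E y z \<and> z \<in> Vs)"
proof
  assume "gwalk E Vs (Suc n) x z"
  then obtain xs where xs: "length xs = Suc (Suc n)" "hd xs = x" "last xs = z" "set xs \<subseteq> Vs"
      "\<forall>i<Suc n. E (xs ! i) (xs ! Suc i)"
    unfolding gwalk_def by blast
  then obtain ys where ys: "xs = ys @ [z]" "length ys = Suc n"
    by (metis append_butlast_last_id length_butlast diff_Suc_1 list.size(3) nat.distinct(1))
  have "gwalk E Vs n x (last ys)"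
    unfolding gwalk_def
  proof (intro exI conjI)
    show "\<forall>i<n. E (ys ! i) (ys ! Suc i)"
    proof (intro allI impI)
      fix i assume "i < n"
      then show "E (ys ! i) (ys ! Suc i)"
        using xs(5)[rule_format, of i] ys by (simp add: nth_append)
    qed
  qed (use xs ys in \<open>auto simp: hd_append\<close>)
  moreover have "E (last ys) z"
    using xs(5)[rule_format, of n] ys
    by (simp add: nth_append last_conv_nth[of ys] flip: length_greater_0_conv)
  ultimately show "\<exists>y. gwalk E Vs n x y \<and> E y z \<and> z \<in> Vs"
    using xs(4) ys(1) by auto
next
  assume "\<exists>y. gwalk E Vs n x y \<and> E y z \<and> z \<in> Vs"
  then obtain y xs where xs: "length xs = Suc n" "hd xs = x" "last xs = y" "set xs \<subseteq> Vs"
      "\<forall>i<n. E (xs ! i) (xs ! Suc i)" and yz: "E y z" "z \<in> Vs"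
    unfolding gwalk_def by blast
  have "last xs = xs ! n"
    using xs(1) by (cases xs rule: rev_cases) auto
  show "gwalk E Vs (Suc n) x z"
    unfolding gwalk_def
  proof (intro exI conjI)
    show "\<forall>i<Suc n. E ((xs @ [z]) ! i) ((xs @ [z]) ! Suc i)"
      using xs yz \<open>last xs = xs ! n\<close> by (auto simp: nth_append less_Suc_eq)
  qed (use xs yz in \<open>auto simp: hd_append\<close>)
qed

lemma gwalk_SucI: "gwalk E Vs n x y \<Longrightarrow> E y z \<Longrightarrow> z \<in> Vs \<Longrightarrow> gwalk E Vs (Suc n) x z"
  unfolding gwalk_Suc_iff by blast

lemma gwalk_rev:
  assumes "symp E" and "gwalk E Vs n x y"
  shows "gwalk E Vs n y x"
proof -
  obtain xs where xs: "length xs = Suc n" "hd xs = x" "last xs = y" "set xs \<subseteq> Vs"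
      "\<forall>i<n. E (xs ! i) (xs ! Suc i)"
    using assms(2) unfolding gwalk_def by blast
  have "E (rev xs ! i) (rev xs ! Suc i)" if "i < n" for i
  proof -
    have "E (xs ! (n - Suc i)) (xs ! Suc (n - Suc i))"
      using xs(5) that by simp
    then show ?thesis
      using that xs(1) assms(1) by (simp add: rev_nth Suc_diff_Suc sympD)
  qed
  then show ?thesis
    unfolding gwalk_def using xs
    by (intro exI[of _ "rev xs"]) (auto simp: hd_rev last_rev)
qed

lemma gdist_commute: "symp E \<Longrightarrow> gdist E Vs x y = gdist E Vs y x"
  unfolding gdist_def by (metis gwalk_rev)

lemma gdist_le: "gwalk E Vs n x y \<Longrightarrow> gdist E Vs x y \<le> n"
  unfolding gdist_def by (rule Least_le)

lemma gwalk_gdist: "gwalk E Vs n x y \<Longrightarrow> gwalk E Vs (gdist E Vs x y) x y"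
  unfolding gdist_def by (rule LeastI)

lemma gwalk_potential_le:
  fixes \<phi> :: "'v \<Rightarrow> int"
  assumes lipschitz: "\<And>x y. E x y \<Longrightarrow> \<bar>\<phi> x - \<phi> y\<bar> \<le> 1"
  shows "gwalk E Vs n x y \<Longrightarrow> \<bar>\<phi> x - \<phi> y\<bar> \<le> int n"
proof (induction n arbitrary: y)
  case 0
  then show ?case by (simp add: gwalk_0_iff)
next
  case (Suc n)
  then obtain y' where "gwalk E Vs n x y'" "E y' y"
    by (auto simp: gwalk_Suc_iff)
  with Suc.IH lipschitz[of y' y] show ?case by fastforce
qed

lemma potential_le_gdist:
  fixes \<phi> :: "'v \<Rightarrow> int"
  assumes "\<And>x y. E x y \<Longrightarrow> \<bar>\<phi> x - \<phi> y\<bar> \<le> 1" and "gwalk E Vs n x y"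
  shows "\<bar>\<phi> x - \<phi> y\<bar> \<le> int (gdist E Vs x y)"
  using gwalk_potential_le[OF assms(1) gwalk_gdist[OF assms(2)]] .

section \<open>Hyperbolic approximation and colored trees\<close>

lemma symp_hedge: "symp (hedge Z d r V)"
  unfolding symp_def hedge_def by (auto simp: Int_commute)

lemma symp_tedge: "symp (tedge \<U> c)"
  unfolding symp_def tedge_def by auto

lemma hdist_commute: "hdist Z d r V p q = hdist Z d r V q p"
  unfolding hdist_def by (rule gdist_commute[OF symp_hedge])

lemma tdist_commute: "tdist \<U> c x y = tdist \<U> c y x"
  unfolding tdist_def by (rule gdist_commute[OF symp_tedge])

text \<open>The vertices on the segment from the root to x; its cardinality serves as the depth of x.\<close>
definition troot_path ::
    "(nat \<Rightarrow> 'c \<Rightarrow> 'a set set) \<Rightarrow> 'c \<Rightarrow> nat \<times> 'a set \<Rightarrow> (nat \<times> 'a set) set" where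
  "troot_path \<U> c x = {z \<in> tverts \<U> c. z = x \<or> tanc z x}"

lemma fst_le_of_troot_path: "z \<in> troot_path \<U> c x \<Longrightarrow> fst z \<le> fst x"
  unfolding troot_path_def tanc_def by auto

lemma troot_path_mono: "y \<in> troot_path \<U> c x \<Longrightarrow> troot_path \<U> c y \<subseteq> troot_path \<U> c x"
  unfolding troot_path_def tanc_def by auto

locale colored_trees =
  fixes Z :: "'a set" and d :: "'a \<Rightarrow> 'a \<Rightarrow> real" and r :: real
    and V :: "int \<Rightarrow> 'a set" and n :: nat and C :: "'c set"
    and \<U> :: "nat \<Rightarrow> 'c \<Rightarrow> 'a set set"
  assumes setting: "colored_setting Z d r V n C \<U>"
begin

lemma
  shows metric: "Metric_space Z d"
    and r_pos: "0 < r"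
    and r_le: "r \<le> 1/6"
    and max_separated_V: "hk0 Z d r \<le> k \<Longrightarrow> max_separated Z d (r powi k) (V k)"
    and r_less_diam: "r < sdiam d Z" "r < 1 / sdiam d Z"
    and finite_C: "finite C"
    and card_C: "card C = n + 1"
    and open_sets:
      "c \<in> C \<Longrightarrow> U \<in> \<U> j c \<Longrightarrow> openin (Metric_space.mtopology Z d) U"
    and nonempty_sets: "c \<in> C \<Longrightarrow> U \<in> \<U> j c \<Longrightarrow> U \<noteq> {}"
    and sets_level_0: "c \<in> C \<Longrightarrow> \<U> 0 c = {Z}"
    and hball_in_cover_set:
      "v \<in> V (int j + 1) \<Longrightarrow> \<exists>c\<in>C. \<exists>U\<in>\<U> j c. hball Z d r (int j + 1, v) \<subseteq> U"
    and bigB_subset_or_disjoint: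
      "c \<in> C \<Longrightarrow> U \<in> \<U> j c \<Longrightarrow> U' \<in> \<U> j' c \<Longrightarrow> U \<noteq> U' \<Longrightarrow> j' \<le> j \<Longrightarrow>
        bigB Z d r V j U \<subseteq> U' \<or> bigB Z d r V j U \<inter> U' = {}"
  using setting unfolding colored_setting_def by auto

interpretation M: Metric_space Z d
  by (rule metric)

lemma sets_subset: "c \<in> C \<Longrightarrow> U \<in> \<U> j c \<Longrightarrow> U \<subseteq> Z"
  using openin_subset[OF open_sets] by simp

lemma hk0_le_0: "hk0 Z d r \<le> 0"
proof -
  let ?P = "\<lambda>k::int. sdiam d Z < r powi k"
  have diam_pos: "0 < sdiam d Z"
    using r_less_diam r_pos by linarith
  have "?P (-1)"
    using r_less_diam(2) diam_pos r_pos by (simp add: power_int_minus field_simps)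
  moreover have "k \<le> 0" if "?P k" for k
  proof (rule ccontr)
    assume "\<not> k \<le> 0"
    then have "r powi k \<le> r"
      using r_pos r_le power_decreasing[of 1 "nat k" r] by (simp add: power_int_def)
    then show False
      using that r_less_diam(1) by linarith
  qed
  ultimately have "?P (hk0 Z d r)"
    unfolding hk0_def by (rule GreatestI_int)
  then show ?thesis
    using \<open>\<And>k. ?P k \<Longrightarrow> k \<le> 0\<close> by blast
qed

lemma V_subset: "hk0 Z d r \<le> k \<Longrightarrow> V k \<subseteq> Z"
  using max_separated_V unfolding max_separated_def by blast

lemma V_net: "hk0 Z d r \<le> k \<Longrightarrow> z \<in> Z \<Longrightarrow> \<exists>v\<in>V k. d z v < r powi k"
  using M.max_separated_net[OF max_separated_V] r_pos by simp

lemma mem_hball: "z \<in> Z \<Longrightarrow> d z w < r powi k \<Longrightarrow> z \<in> hball Z d r (k, w)"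
  using zero_less_power_int[OF r_pos, of k] unfolding hball_def by auto

lemma hverts_in_hball: "p \<in> hverts Z d r V \<Longrightarrow> snd p \<in> hball Z d r p"
  using V_subset mem_hball[of "snd p" "snd p" "fst p"] zero_less_power_int[OF r_pos, of "fst p"]
  unfolding hverts_def by fastforce

lemma hball_subset_parent:
  assumes "hk0 Z d r \<le> m - 1" "w \<in> V m" "w' \<in> V (m - 1)"
    and close: "d w w' < r powi (m - 1)"
  shows "hball Z d r (m, w) \<subseteq> hball Z d r (m - 1, w')"
proof
  fix z assume z: "z \<in> hball Z d r (m, w)"
  have "w \<in> Z" "w' \<in> Z"
    using assms V_subset[of m] V_subset[of "m - 1"] by auto
  have "r powi m = r powi (m - 1) * r"
    using r_pos power_int_add_1[of r "m - 1"] by simp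
  also have "\<dots> \<le> r powi (m - 1) / 6"
    using r_le r_pos by (simp add: mult_left_mono)
  finally have "d z w' < 2 * r powi (m - 1)"
    using z M.triangle[of z w w'] \<open>w \<in> Z\<close> \<open>w' \<in> Z\<close> close
      zero_less_power_int[OF r_pos, of "m - 1"]
    unfolding hball_def by simp
  then show "z \<in> hball Z d r (m - 1, w')"
    using z unfolding hball_def by simp
qed

lemma exists_upward_walk:
  assumes "v \<in> V j" and "hk0 Z d r \<le> j - int i"
  shows "\<exists>w\<in>V (j - int i). hball Z d r (j, v) \<subseteq> hball Z d r (j - int i, w)
           \<and> gwalk (hedge Z d r V) (hverts Z d r V) i (j, v) (j - int i, w)"
  using assms(2)
proof (induction i)
  case 0
  then have "(j, v) \<in> hverts Z d r V"
    using assms(1) unfolding hverts_def by simp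
  then show ?case
    using assms(1) by (auto simp: gwalk_0_iff)
next
  case (Suc i)
  define m where "m = j - int i"
  have level: "hk0 Z d r \<le> m - 1" "j - int (Suc i) = m - 1"
    using Suc.prems unfolding m_def by auto
  then have "hk0 Z d r \<le> j - int i"
    unfolding m_def by simp
  then obtain w where w: "w \<in> V m" "hball Z d r (j, v) \<subseteq> hball Z d r (m, w)"
      "gwalk (hedge Z d r V) (hverts Z d r V) i (j, v) (m, w)"
    using Suc.IH unfolding m_def by blast
  have "w \<in> Z"
    using V_subset[of m] level(1) w(1) by auto
  then obtain w' where w': "w' \<in> V (m - 1)" "d w w' < r powi (m - 1)"
    using V_net[OF level(1)] by blast
  have step: "hball Z d r (m, w) \<subseteq> hball Z d r (m - 1, w')"
    using hball_subset_parent[OF level(1) w(1) w'] .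
  have "(m, w) \<in> hverts Z d r V" and w'_vert: "(m - 1, w') \<in> hverts Z d r V"
    using level(1) w(1) w'(1) unfolding hverts_def by auto
  with step have "hedge Z d r V (m, w) (m - 1, w')"
    unfolding hedge_def by simp
  then show ?case
    unfolding level(2) using w w'(1) step gwalk_SucI[OF w(3) _ w'_vert] by blast
qed

lemma hdist_le_level_difference:
  assumes p: "(int a, v) \<in> hverts Z d r V" and q: "(int b, w) \<in> hverts Z d r V"
    and "b \<le> a" and close: "d v w < r ^ b"
  shows "hdist Z d r V (int a, v) (int b, w) \<le> a - b + 1"
proof -
  have "int a - int (a - b) = int b"
    using \<open>b \<le> a\<close> by simp
  then obtain w' where w': "w' \<in> V (int b)"
      "hball Z d r (int a, v) \<subseteq> hball Z d r (int b, w')"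
      "gwalk (hedge Z d r V) (hverts Z d r V) (a - b) (int a, v) (int b, w')"
    using exists_upward_walk[of v "int a" "a - b"] p q unfolding hverts_def by auto
  show ?thesis
  proof (cases "w' = w")
    case True
    then show ?thesis
      using gdist_le[OF w'(3)] unfolding hdist_def by simp
  next
    case False
    have "v \<in> hball Z d r (int b, w')"
      using w'(2) hverts_in_hball[OF p] by auto
    moreover have "v \<in> hball Z d r (int b, w)"
      using mem_hball[of v w "int b"] close p V_subset unfolding hverts_def by auto
    moreover have "hball Z d r x \<subseteq> hcball Z d r x" for x
      unfolding hcball_def by (rule closure_of_subset) (auto simp: hball_def)
    ultimately have "hcball Z d r (int b, w') \<inter> hcball Z d r (int b, w) \<noteq> {}"
      by blast
    then have "hedge Z d r V (int b, w') (int b, w)"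
      using False q w'(1) unfolding hedge_def hverts_def by simp
    then have "gwalk (hedge Z d r V) (hverts Z d r V) (Suc (a - b)) (int a, v) (int b, w)"
      using gwalk_SucI[OF w'(3)] q by blast
    then show ?thesis
      unfolding hdist_def using gdist_le by fastforce
  qed
qed

lemma subset_bigB:
  assumes "c \<in> C" and "W \<in> \<U> j c"
  shows "W \<subseteq> bigB Z d r V j W"
proof
  fix z assume "z \<in> W"
  then have "z \<in> Z"
    using sets_subset assms by blast
  then obtain v where v: "v \<in> V (int j + 1)" "d z v < r powi (int j + 1)"
    using V_net[of "int j + 1"] hk0_le_0 by auto
  then have "z \<in> hball Z d r (int j + 1, v)"
    using mem_hball \<open>z \<in> Z\<close> by blast
  then show "z \<in> bigB Z d r V j W"
    unfolding bigB_def using v(1) \<open>z \<in> W\<close> by blast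
qed

lemma colored_sets_nested:
  assumes "c \<in> C" "U \<in> \<U> i c" "W \<in> \<U> j c" "i \<le> j" "U \<inter> W \<noteq> {}"
  shows "W \<subseteq> U"
  using bigB_subset_or_disjoint[of c W j U i] subset_bigB[of c W j] assms by blast

lemma same_level_eq:
  assumes "c \<in> C" "U \<in> \<U> j c" "W \<in> \<U> j c" "U \<inter> W \<noteq> {}"
  shows "U = W"
  using colored_sets_nested[of c U j W j] colored_sets_nested[of c W j U j] assms by blast

lemma tverts_comparable:
  assumes c: "c \<in> C" and "x \<in> tverts \<U> c" "y \<in> tverts \<U> c" "snd x \<inter> snd y \<noteq> {}"
  shows "x = y \<or> tanc x y \<or> tanc y x"
proof -
  have x: "snd x \<in> \<U> (fst x) c" and y: "snd y \<in> \<U> (fst y) c"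
    using assms unfolding tverts_def by auto
  consider "fst x < fst y" | "fst y < fst x" | "fst x = fst y"
    by linarith
  then show ?thesis
  proof cases
    case 1
    then show ?thesis
      using colored_sets_nested[OF c x y] assms(4) unfolding tanc_def by simp
  next
    case 2
    then show ?thesis
      using colored_sets_nested[OF c y x] assms(4) unfolding tanc_def by (simp add: inf_commute)
  next
    case 3
    then show ?thesis
      using same_level_eq[OF c x] y assms(4) by (simp add: prod_eq_iff)
  qed
qed

lemma troot_path_comparable:
  assumes "c \<in> C" "x \<in> tverts \<U> c" "y \<in> troot_path \<U> c x" "z \<in> troot_path \<U> c x"
  shows "y = z \<or> tanc y z \<or> tanc z y"
proof (rule tverts_comparable)
  have "snd x \<noteq> {}"
    using nonempty_sets assms(1,2) unfolding tverts_def by auto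
  moreover have "snd x \<subseteq> snd y" "snd x \<subseteq> snd z"
    using assms(3,4) unfolding troot_path_def tanc_def by auto
  ultimately show "snd y \<inter> snd z \<noteq> {}"
    by blast
qed (use assms in \<open>auto simp: troot_path_def\<close>)

lemma finite_troot_path:
  assumes "c \<in> C" "x \<in> tverts \<U> c"
  shows "finite (troot_path \<U> c x)"
proof -
  have "inj_on fst (troot_path \<U> c x)"
    using troot_path_comparable[OF assms] unfolding tanc_def by (fastforce intro: inj_onI)
  moreover have "fst ` troot_path \<U> c x \<subseteq> {..fst x}"
    using fst_le_of_troot_path by fastforce
  ultimately show ?thesis
    using finite_imageD finite_subset by blast
qed

lemma troot_path_parent:
  assumes c: "c \<in> C" and "x \<in> tverts \<U> c" "y \<in> tverts \<U> c" "tanc x y"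
    and parent: "\<forall>z\<in>tverts \<U> c. tanc z y \<longrightarrow> fst z \<le> fst x"
  shows "troot_path \<U> c y = insert y (troot_path \<U> c x)" and "y \<notin> troot_path \<U> c x"
proof -
  have x: "x \<in> troot_path \<U> c y"
    using assms unfolding troot_path_def by simp
  show "y \<notin> troot_path \<U> c x"
    using fst_le_of_troot_path \<open>tanc x y\<close> unfolding tanc_def by fastforce
  have "z \<in> troot_path \<U> c x" if z: "z \<in> troot_path \<U> c y" "z \<noteq> y" for z
  proof -
    have "fst z \<le> fst x"
      using z parent unfolding troot_path_def by auto
    then have "z = x \<or> tanc z x"
      using troot_path_comparable[OF c \<open>y \<in> tverts \<U> c\<close> z(1) x] unfolding tanc_def by auto
    then show ?thesis
      using z unfolding troot_path_def by auto
  qed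
  moreover have "y \<in> troot_path \<U> c y"
    using assms unfolding troot_path_def by simp
  ultimately show "troot_path \<U> c y = insert y (troot_path \<U> c x)"
    using troot_path_mono[OF x] by blast
qed

lemma tedge_card_troot_path:
  assumes c: "c \<in> C" and "tedge \<U> c x y"
  shows "\<bar>int (card (troot_path \<U> c x)) - int (card (troot_path \<U> c y))\<bar> \<le> 1"
proof -
  have card_child: "card (troot_path \<U> c v) = Suc (card (troot_path \<U> c u))"
    if "u \<in> tverts \<U> c" "v \<in> tverts \<U> c" "tanc u v"
      "\<forall>z\<in>tverts \<U> c. tanc z v \<longrightarrow> fst z \<le> fst u" for u v
    using troot_path_parent[OF c that] finite_troot_path[OF c \<open>u \<in> tverts \<U> c\<close>] by simp
  show ?thesis
    using \<open>tedge \<U> c x y\<close> card_child[of x y] card_child[of y x] unfolding tedge_def by auto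
qed

lemma exists_tparent:
  assumes c: "c \<in> C" and y: "y \<in> tverts \<U> c" and x: "x \<in> tverts \<U> c" "tanc x y"
  obtains p where "tedge \<U> c p y" "tanc p y" "x \<in> troot_path \<U> c p"
proof -
  define P where "P = troot_path \<U> c y - {y}"
  have "finite P" "x \<in> P"
    using finite_troot_path[OF c y] x unfolding P_def troot_path_def tanc_def by auto
  then have "Max (fst ` P) \<in> fst ` P"
    by (intro Max_in) auto
  then obtain p where p: "p \<in> P" "fst p = Max (fst ` P)"
    by (metis imageE)
  have max: "fst z \<le> fst p" if "z \<in> P" for z
    using p(2) \<open>finite P\<close> that by simp
  have "tanc p y" "p \<in> tverts \<U> c"
    using p(1) unfolding P_def troot_path_def by auto
  moreover have "\<forall>z\<in>tverts \<U> c. tanc z y \<longrightarrow> fst z \<le> fst p"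
  proof (intro ballI impI)
    fix z assume "z \<in> tverts \<U> c" "tanc z y"
    then have "z \<in> P"
      unfolding P_def troot_path_def tanc_def by auto
    then show "fst z \<le> fst p"
      by (rule max)
  qed
  ultimately have "tedge \<U> c p y"
    using y unfolding tedge_def by blast
  have "x \<in> troot_path \<U> c y" "p \<in> troot_path \<U> c y"
    using \<open>x \<in> P\<close> p(1) unfolding P_def by auto
  then have "x = p \<or> tanc x p \<or> tanc p x"
    by (rule troot_path_comparable[OF c y])
  then have "x \<in> troot_path \<U> c p"
    using max[OF \<open>x \<in> P\<close>] x(1) unfolding troot_path_def tanc_def by auto
  with \<open>tedge \<U> c p y\<close> \<open>tanc p y\<close> show ?thesis
    by (rule that)
qed

lemma gwalk_from_troot_path:
  assumes c: "c \<in> C"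
  shows "y \<in> tverts \<U> c \<Longrightarrow> x \<in> troot_path \<U> c y \<Longrightarrow>
    \<exists>n. gwalk (tedge \<U> c) (tverts \<U> c) n x y"
proof (induction "fst y" arbitrary: y rule: less_induct)
  case less
  show ?case
  proof (cases "x = y")
    case True
    then have "gwalk (tedge \<U> c) (tverts \<U> c) 0 x y"
      using less.prems(1) by (simp add: gwalk_0_iff)
    then show ?thesis ..
  next
    case False
    then have "x \<in> tverts \<U> c" "tanc x y"
      using less.prems unfolding troot_path_def by auto
    then obtain p where p: "tedge \<U> c p y" "tanc p y" "x \<in> troot_path \<U> c p"
      using exists_tparent[OF c less.prems(1)] by blast
    have "p \<in> tverts \<U> c" "fst p < fst y"
      using p(1,2) unfolding tedge_def tanc_def by auto
    then obtain n where "gwalk (tedge \<U> c) (tverts \<U> c) n x p"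
      using less.hyps p(3) by blast
    then have "gwalk (tedge \<U> c) (tverts \<U> c) (Suc n) x y"
      using p(1) less.prems(1) by (rule gwalk_SucI)
    then show ?thesis ..
  qed
qed

lemma card_troot_path_diff_le_tdist:
  assumes c: "c \<in> C" and x: "x \<in> tverts \<U> c" and y: "y \<in> tverts \<U> c"
    and "x = y \<or> tanc x y \<or> tanc y x"
  shows "card (troot_path \<U> c x - troot_path \<U> c y) \<le> tdist \<U> c x y"
proof (cases "tanc x y")
  case True
  then have "troot_path \<U> c x \<subseteq> troot_path \<U> c y"
    using x by (intro troot_path_mono) (simp add: troot_path_def)
  then show ?thesis
    by (simp add: Diff_eq_empty_iff[THEN iffD2])
next
  case False
  then have "y \<in> troot_path \<U> c x"
    using assms unfolding troot_path_def by auto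
  then obtain n where walk: "gwalk (tedge \<U> c) (tverts \<U> c) n y x"
    using gwalk_from_troot_path[OF c x] by blast
  have lipschitz: "\<bar>int (card (troot_path \<U> c u)) - int (card (troot_path \<U> c v))\<bar> \<le> 1"
    if "tedge \<U> c u v" for u v
    using tedge_card_troot_path[OF c that] .
  have "\<bar>int (card (troot_path \<U> c y)) - int (card (troot_path \<U> c x))\<bar>
      \<le> int (tdist \<U> c y x)"
    unfolding tdist_def by (rule potential_le_gdist[OF lipschitz walk])
  moreover have "card (troot_path \<U> c x - troot_path \<U> c y)
      = card (troot_path \<U> c x) - card (troot_path \<U> c y)"
    using finite_troot_path[OF c y] troot_path_mono[OF \<open>y \<in> troot_path \<U> c x\<close>]
    by (rule card_Diff_subset)
  ultimately show ?thesis
    using tdist_commute[of \<U> c x y] by linarith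
qed

section \<open>The maps f_c\<close>

lemma fmap_cases:
  assumes c: "c \<in> C" and p: "(int a, v) \<in> hverts Z d r V"
  obtains i U where "fmap Z d r \<U> c (int a, v) = (i, U)" "U \<in> \<U> i c"
    "hball Z d r (int a, v) \<subseteq> U" "i \<le> a - 1"
    "\<And>k U'. k \<le> a - 1 \<Longrightarrow> U' \<in> \<U> k c \<Longrightarrow> hball Z d r (int a, v) \<subseteq> U' \<Longrightarrow> k \<le> i"
proof (cases "int a = hk0 Z d r")
  case True
  then have "a = 0" "fmap Z d r \<U> c (int a, v) = (0, Z)"
    using hk0_le_0 unfolding fmap_def by auto
  then show ?thesis
    using that[of 0 Z] sets_level_0[OF c] by (auto simp: hball_def)
next
  case False
  let ?B = "hball Z d r (int a, v)"
  define P where "P = (\<lambda>j. j \<le> a - 1 \<and> (\<exists>U\<in>\<U> j c. ?B \<subseteq> U))"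
  define i where "i = Greatest P"
  have "P 0"
    unfolding P_def using sets_level_0[OF c] by (auto simp: hball_def)
  then have "P i" and max: "\<And>k. P k \<Longrightarrow> k \<le> i"
    unfolding i_def using GreatestI_nat[of P 0 "a - 1"] Greatest_le_nat[of P _ "a - 1"]
    by (auto simp: P_def)
  then obtain U where U: "U \<in> \<U> i c" "?B \<subseteq> U"
    unfolding P_def by blast
  have "snd (int a, v) \<in> ?B"
    using hverts_in_hball[OF p] .
  then have "(THE U. U \<in> \<U> i c \<and> ?B \<subseteq> U) = U"
    using U same_level_eq[OF c _ U(1)] by (intro the_equality) auto
  moreover have "nat (max (int a - 1) 0) = a - 1"
    by simp
  ultimately have "fmap Z d r \<U> c (int a, v) = (i, U)"
    using False unfolding fmap_def i_def P_def by (simp add: Let_def)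
  then show ?thesis
    using that U \<open>P i\<close> max unfolding P_def by blast
qed

lemma fmap_in_tverts:
  "c \<in> C \<Longrightarrow> (int a, v) \<in> hverts Z d r V \<Longrightarrow> fmap Z d r \<U> c (int a, v) \<in> tverts \<U> c"
  by (rule fmap_cases) (auto simp: tverts_def)

lemma fmap_comparable:
  assumes c: "c \<in> C" and p: "(int a, v) \<in> hverts Z d r V"
    and q: "(int b, w) \<in> hverts Z d r V" and "b \<le> a" and close: "d v w < r ^ b"
  shows "fmap Z d r \<U> c (int a, v) = fmap Z d r \<U> c (int b, w)
     \<or> tanc (fmap Z d r \<U> c (int a, v)) (fmap Z d r \<U> c (int b, w))
     \<or> tanc (fmap Z d r \<U> c (int b, w)) (fmap Z d r \<U> c (int a, v))"
proof (rule tverts_comparable[OF c fmap_in_tverts[OF c p] fmap_in_tverts[OF c q]])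
  have "v \<in> hball Z d r (int a, v)"
    using hverts_in_hball[OF p] by simp
  moreover have "v \<in> hball Z d r (int b, w)"
    using mem_hball[of v w "int b"] close p V_subset unfolding hverts_def by auto
  ultimately show
    "snd (fmap Z d r \<U> c (int a, v)) \<inter> snd (fmap Z d r \<U> c (int b, w)) \<noteq> {}"
    using fmap_cases[OF c p] fmap_cases[OF c q] by (metis disjoint_iff snd_conv subsetD)
qed

definition ball_levels :: "'c \<Rightarrow> int \<times> 'a \<Rightarrow> nat set" where
  "ball_levels c p = {k. \<exists>U\<in>\<U> k c. hball Z d r p \<subseteq> U}"

lemma ball_levels_cover:
  assumes p: "(int a, v) \<in> hverts Z d r V" and "k < a"
  shows "\<exists>c\<in>C. k \<in> ball_levels c (int a, v)"
proof -
  have level: "int a - int (a - Suc k) = int k + 1"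
    using \<open>k < a\<close> by simp
  have "v \<in> V (int a)"
    using p unfolding hverts_def by simp
  moreover have "hk0 Z d r \<le> int a - int (a - Suc k)"
    using level hk0_le_0 by simp
  ultimately obtain w where w: "w \<in> V (int k + 1)"
      "hball Z d r (int a, v) \<subseteq> hball Z d r (int k + 1, w)"
    using exists_upward_walk[of v "int a" "a - Suc k"] unfolding level by auto
  then obtain c U where "c \<in> C" "U \<in> \<U> k c" "hball Z d r (int k + 1, w) \<subseteq> U"
    using hball_in_cover_set by blast
  then show ?thesis
    using w(2) unfolding ball_levels_def by blast
qed

lemma exists_color_with_many_ball_levels:
  assumes "(int a, v) \<in> hverts Z d r V"
  shows "\<exists>c\<in>C. a - b \<le> card C * card (ball_levels c (int a, v) \<inter> {b..<a})"
proof -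
  have "C \<noteq> {}"
    using card_C by auto
  moreover have "{b..<a} \<subseteq> (\<Union>c\<in>C. ball_levels c (int a, v))"
    using ball_levels_cover[OF assms] by auto
  ultimately show ?thesis
    using pigeonhole_card_UN[of "{b..<a}" C] finite_C by simp
qed

lemma ball_levels_in_troot_path:
  assumes c: "c \<in> C" and p: "(int a, v) \<in> hverts Z d r V"
    and "k \<in> ball_levels c (int a, v)" "k < a"
  shows "k \<in> fst ` troot_path \<U> c (fmap Z d r \<U> c (int a, v))"
proof -
  obtain i U where fmap: "fmap Z d r \<U> c (int a, v) = (i, U)" "U \<in> \<U> i c"
      "hball Z d r (int a, v) \<subseteq> U"
      and max: "\<And>k U'. k \<le> a - 1 \<Longrightarrow> U' \<in> \<U> k c \<Longrightarrow>
        hball Z d r (int a, v) \<subseteq> U' \<Longrightarrow> k \<le> i"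
    using fmap_cases[OF c p] by metis
  obtain W where W: "W \<in> \<U> k c" "hball Z d r (int a, v) \<subseteq> W"
    using assms(3) unfolding ball_levels_def by blast
  have "k \<le> i"
    using max[OF _ W] \<open>k < a\<close> by simp
  moreover have "v \<in> U \<inter> W"
    using hverts_in_hball[OF p] fmap(3) W(2) by auto
  ultimately have "(k, W) = (i, U) \<or> tanc (k, W) (i, U)"
    using tverts_comparable[OF c, of "(k, W)" "(i, U)"] W(1) fmap(2)
    unfolding tverts_def tanc_def by auto
  then have "(k, W) \<in> troot_path \<U> c (i, U)"
    using W(1) unfolding troot_path_def tverts_def by simp
  then show ?thesis
    unfolding fmap(1) by force
qed

lemma card_ball_levels_le_tdist:
  assumes c: "c \<in> C" and p: "(int a, v) \<in> hverts Z d r V"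
    and q: "(int b, w) \<in> hverts Z d r V" and "b \<le> a" and close: "d v w < r ^ b"
  shows "card (ball_levels c (int a, v) \<inter> {b..<a})
    \<le> tdist \<U> c (fmap Z d r \<U> c (int a, v)) (fmap Z d r \<U> c (int b, w)) + 1"
proof -
  define x where "x = fmap Z d r \<U> c (int a, v)"
  define y where "y = fmap Z d r \<U> c (int b, w)"
  have "fst y \<le> b"
    unfolding y_def by (rule fmap_cases[OF c q]) auto
  txt \<open>Only level b can also be the level of a vertex on the root path of y.\<close>
  have "ball_levels c (int a, v) \<inter> {b..<a}
      \<subseteq> insert b (fst ` (troot_path \<U> c x - troot_path \<U> c y))"
  proof
    fix k assume k: "k \<in> ball_levels c (int a, v) \<inter> {b..<a}"
    then obtain z where z: "z \<in> troot_path \<U> c x" "k = fst z"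
      using ball_levels_in_troot_path[OF c p] unfolding x_def by fastforce
    show "k \<in> insert b (fst ` (troot_path \<U> c x - troot_path \<U> c y))"
    proof (cases "z \<in> troot_path \<U> c y")
      case True
      then have "k = b"
        using fst_le_of_troot_path[OF True] \<open>fst y \<le> b\<close> k z(2) by simp
      then show ?thesis
        by simp
    next
      case False
      then show ?thesis
        using z by blast
    qed
  qed
  moreover have fin: "finite (troot_path \<U> c x - troot_path \<U> c y)"
    unfolding x_def using finite_troot_path[OF c fmap_in_tverts[OF c p]] by simp
  ultimately have "card (ball_levels c (int a, v) \<inter> {b..<a})
      \<le> card (insert b (fst ` (troot_path \<U> c x - troot_path \<U> c y)))"
    by (intro card_mono) auto
  also have "\<dots> \<le> card (troot_path \<U> c x - troot_path \<U> c y) + 1"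
    using card_image_le[OF fin, of fst] fin by (simp add: card_insert_if)
  also have "\<dots> \<le> tdist \<U> c x y + 1"
    using card_troot_path_diff_le_tdist[OF c] fmap_in_tverts[OF c] p q
      fmap_comparable[OF c p q \<open>b \<le> a\<close> close]
    unfolding x_def y_def by simp
  finally show ?thesis
    unfolding x_def y_def .
qed

lemma hdist_le_tdist:
  assumes p: "(int a, v) \<in> hverts Z d r V" and q: "(int b, w) \<in> hverts Z d r V"
    and "b \<le> a" and close: "d v w < r ^ b"
  shows "\<exists>c\<in>C. real (hdist Z d r V (int a, v) (int b, w))
    \<le> real (card C) * real (tdist \<U> c (fmap Z d r \<U> c (int a, v)) (fmap Z d r \<U> c (int b, w)))
      + real (card C) + 1"
proof -
  obtain c where c: "c \<in> C"
    and many: "a - b \<le> card C * card (ball_levels c (int a, v) \<inter> {b..<a})"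
    using exists_color_with_many_ball_levels[OF p] by blast
  let ?t = "tdist \<U> c (fmap Z d r \<U> c (int a, v)) (fmap Z d r \<U> c (int b, w))"
  have "hdist Z d r V (int a, v) (int b, w) \<le> a - b + 1"
    using hdist_le_level_difference[OF p q \<open>b \<le> a\<close> close] .
  also have "\<dots> \<le> card C * (?t + 1) + 1"
    using many card_ball_levels_le_tdist[OF c p q \<open>b \<le> a\<close> close]
    by (meson add_le_mono1 le_trans mult_le_mono2)
  finally have "real (hdist Z d r V (int a, v) (int b, w)) \<le> real (card C * (?t + 1) + 1)"
    by (rule of_nat_mono)
  with c show ?thesis
    by (auto simp: algebra_simps)
qed

end

theorem mainTheorem16:
  fixes Z :: "'a set" and d :: "'a \<Rightarrow> 'a \<Rightarrow> real" and r :: real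
    and V :: "int \<Rightarrow> 'a set" and n :: nat and C :: "'c set"
    and \<U> :: "nat \<Rightarrow> 'c \<Rightarrow> 'a set set" and p q :: "int \<times> 'a"
  assumes setting: "colored_setting Z d r V n C \<U>"
    and p: "p \<in> hverts Z d r V" and q: "q \<in> hverts Z d r V"
    and hc: "horiz_close d r p q"
  shows "(\<forall>c\<in>C. fmap Z d r \<U> c p = fmap Z d r \<U> c q
                \<or> tanc (fmap Z d r \<U> c p) (fmap Z d r \<U> c q)
                \<or> tanc (fmap Z d r \<U> c q) (fmap Z d r \<U> c p))
       \<and> (\<exists>c\<in>C. real (hdist Z d r V p q)
                 \<le> real (card C) * real (tdist \<U> c (fmap Z d r \<U> c p) (fmap Z d r \<U> c q))
                   + real (card C) + 1)"
proof -
  interpret colored_trees Z d r V n C \<U>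
    using setting by unfold_locales
  obtain a b where "fst p = int a" "fst q = int b"
    using hc unfolding horiz_close_def by (metis min.bounded_iff nonneg_eq_int)
  then obtain v w where pq: "p = (int a, v)" "q = (int b, w)"
    by (metis prod.collapse)
  have close: "d v w < r ^ min a b" "d w v < r ^ min a b"
    using hc Metric_space.commute[OF metric] unfolding horiz_close_def pq
    by (simp_all add: power_int_of_nat flip: of_nat_min)
  have p': "(int a, v) \<in> hverts Z d r V" and q': "(int b, w) \<in> hverts Z d r V"
    using p q unfolding pq .
  show ?thesis
  proof (cases "b \<le> a")
    case True
    with close(1) have "d v w < r ^ b"
      by (simp add: min_absorb2)
    then show ?thesis
      unfolding pq using fmap_comparable[OF _ p' q' True] hdist_le_tdist[OF p' q' True] by blast
  next
    case False
    with close(2) have "a \<le> b" "d w v < r ^ a"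
      by (simp_all add: min_absorb1)
    then show ?thesis
      using fmap_comparable[OF _ q' p'] hdist_le_tdist[OF q' p']
      unfolding pq hdist_commute[of Z d r V "(int b, w)"]
        tdist_commute[of \<U> _ "fmap Z d r \<U> _ (int b, w)"]
      by fastforce
  qed
qed

end
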